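(* If $\mathsf{A},\mathsf{B},\mathsf{C}\in\mathbb{S}$ with $\mathsf{B},\mathsf{C}\neq\mathsf{0}$, then $\exp\big(\mathsf{A}+\mathsf{B}*\exp(\mathsf{C})\big)\le\exp\big((\mathsf{A}+\mathsf{B})*\exp(\mathsf{C})\big)$.
   Context: Standard generating sets: $\mathrm{Homeo}_+(I)$ acts on $I=[0,1]$ on the right. Support $\mathrm{supt}(f)=\{t:tf\ne t\}$; extended support = interior of its closure; orbitals = components of the support, endpoints = transition points; a bump has exactly one orbital, positive if $tf>t$ there, else negative. A marking assigns to each bump $b$ with support $(u,v)$ a point $s_b\in(u,v)$; feet of $b$: $(u,s_b)$ and $[t_b,v)$ with $t_b=s_bb$ ($b$ positive) or $s_bb^{-1}$ ($b$ negative). A marked function has finitely many bumps, each marked. A finite set of marked functions is fast if no bump occurs in two of its elements and distinct bumps have disjoint feet. A standard function is a marked function whose extended support is an interval, with all positive bumps right of all negative bumps, and #positive $-$ #negative bumps $\in\{0,1\}$. For standard $f,g$: $f\ll g$ iff extended supports disjoint with $f$'s to the left; $f\sqsubset g$ iff closure of extended support of $f$ lies in extended support of $g$; $f<g$ iff $f\ll g$ or $f\sqsubset g$. $f^\circ$: if $f$ has $>2$ orbitals, $f$ restricted to the union of its non-extreme orbitals; if $f$ has 1 or 2 orbitals and the left foot of its positive bump is $(r,s)$, a positive bump with support $(r,s)$. $(f,g)$ is a standard pair if $\{f,g\}$ is fast and either $f\ll g$ or ($f\sqsubset g$ and $(g^\circ,f)$ is a standard pair). $\mathcal{S}$ = finite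 sets of standard functions, pairwise $<$-comparable, each pair $f<g$ a standard pair. Oscillation $o(f,g)$ for $f<g$: number of orbitals of $g$ containing a transition point of $f$. Signatures: the signature of $A\in\mathcal S$ is $(f,g)\mapsto o(f,g)$ on pairs $f<g$; functions on pairs of finite linear orders are equivalent if an order-preserving bijection of bases carries one to the other; $\mathbb{S}$ = signatures of members of $\mathcal S$ up to equivalence. $\mathsf{0}$: empty base. $\mathsf{A}+\mathsf{B}$: base $A$ followed by $B$, agreeing with $\mathsf{A},\mathsf{B}$ on their bases, value $0$ across. $\exp(\mathsf{A})$: same base, values $\mathsf{A}(i,j)+1$. $\mathsf{A}*\exp(\mathsf{C})$: base $A$ followed by $C$, agreeing with $\mathsf{A}$ on $A$, with $\exp(\mathsf{C})$ on $C$, value $1$ across. Inflation: for $\mathsf{A}$ with base $A$ and $m\in A$, $\mathsf{A}^m$ has base $A\cup\{i^m:i<m,\ \mathsf{A}(i,m)>0\}$, new elements placed above all elements of $A$ below $m$ and below $m$, $i^m<j^m$ iff $i<j$; for $i,j<m\le k$ (with $\mathsf{A}(m,m)=\infty$): $\mathsf{A}^m(i^m,j^m)=\mathsf{A}(i,j)$, $\mathsf{A}^m(i,j^m)=\min(\mathsf{A}(j,m)-1,\mathsf{A}(i,m))$, $\mathsf{A}^m(i^m,k)=\min(\mathsf{A}(i,m),\mathsf{A}(m,k))$, other values as in $\mathsf{A}$. $\mathsf{A}\le\mathsf{B}$ iff there is a sequence $\mathsf{B}_0=\mathsf{B},\dots,\mathsf{B}_n=\mathsf{A}$ with each $\mathsf{B}_{i+1}$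 (equivalent to) a restriction to a subset of the base of an inflation of $\mathsf{B}_i$. *)

theory Defs
  imports "HOL-Analysis.Analysis"
begin

text \<open>Elements of Homeo_+(I) are represented by functions real => real; only their
  values on [0,1] matter. The right action t f is written f t.\<close>

definition homeo_plus :: "(real \<Rightarrow> real) \<Rightarrow> bool" where
  "homeo_plus f \<longleftrightarrow> continuous_on {0..1} f \<and> strict_mono_on {0..1} f \<and> f ` {0..1} = {0..1}"

definition supt :: "(real \<Rightarrow> real) \<Rightarrow> real set" where
  "supt f = {t \<in> {0..1}. f t \<noteq> t}"

definition ext_supp :: "(real \<Rightarrow> real) \<Rightarrow> real set" where
  "ext_supp f = interior (closure (supt f))"

definition orbitals :: "(real \<Rightarrow> real) \<Rightarrow> real set set" where
  "orbitals f = components (supt f)"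

definition pos_orb :: "(real \<Rightarrow> real) \<Rightarrow> real set \<Rightarrow> bool" where
  "pos_orb f J \<longleftrightarrow> (\<forall>t\<in>J. t < f t)"

definition neg_orb :: "(real \<Rightarrow> real) \<Rightarrow> real set \<Rightarrow> bool" where
  "neg_orb f J \<longleftrightarrow> (\<forall>t\<in>J. f t < t)"

definition trans_pts :: "(real \<Rightarrow> real) \<Rightarrow> real set" where
  "trans_pts f = (\<Union>J\<in>orbitals f. {Inf J, Sup J})"

definition left_of :: "real set \<Rightarrow> real set \<Rightarrow> bool" where
  "left_of J K \<longleftrightarrow> (\<forall>x\<in>J. \<forall>y\<in>K. x < y)"

text \<open>A marked function is a pair (f, M): f in Homeo_+(I) with finitely many orbitals
  (= bumps), and M the set of marks, containing exactly one point of each orbital.\<close>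

type_synonym mfun = "(real \<Rightarrow> real) \<times> real set"

definition marked :: "mfun \<Rightarrow> bool" where
  "marked F \<longleftrightarrow> homeo_plus (fst F) \<and> finite (orbitals (fst F)) \<and>
     snd F \<subseteq> supt (fst F) \<and> (\<forall>J\<in>orbitals (fst F). \<exists>!s. s \<in> snd F \<inter> J)"

definition mark :: "mfun \<Rightarrow> real set \<Rightarrow> real" where
  "mark F J = (THE s. s \<in> snd F \<inter> J)"

text \<open>t_b = s_b b for positive bumps, s_b b^{-1} for negative ones (b agrees with f on its orbital).\<close>
definition tpt :: "mfun \<Rightarrow> real set \<Rightarrow> real" where
  "tpt F J = (if pos_orb (fst F) J then fst F (mark F J) else inv_into {0..1} (fst F) (mark F J))"

definition feet :: "mfun \<Rightarrow> real set \<Rightarrow> real set" where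
  "feet F J = {Inf J<..<mark F J} \<union> {tpt F J..<Sup J}"

definition fast :: "mfun set \<Rightarrow> bool" where
  "fast \<F> \<longleftrightarrow> finite \<F> \<and> (\<forall>F\<in>\<F>. marked F) \<and>
     (\<forall>F\<in>\<F>. \<forall>G\<in>\<F>. F \<noteq> G \<longrightarrow>
        (\<forall>J\<in>orbitals (fst F). \<forall>K\<in>orbitals (fst G).
           \<not> (J = K \<and> (\<forall>t\<in>J. fst F t = fst G t)) \<and> feet F J \<inter> feet G K = {}))"

definition standard :: "mfun \<Rightarrow> bool" where
  "standard F \<longleftrightarrow> marked F \<and> (\<exists>a b. a < b \<and> ext_supp (fst F) = {a<..<b}) \<and>
     (\<forall>J\<in>orbitals (fst F). \<forall>K\<in>orbitals (fst F).
        neg_orb (fst F) J \<and> pos_orb (fst F) K \<longrightarrow> left_of J K) \<and>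
     (card {J\<in>orbitals (fst F). pos_orb (fst F) J} = card {J\<in>orbitals (fst F). neg_orb (fst F) J}
      \<or> card {J\<in>orbitals (fst F). pos_orb (fst F) J} = card {J\<in>orbitals (fst F). neg_orb (fst F) J} + 1)"

definition std_ll :: "mfun \<Rightarrow> mfun \<Rightarrow> bool" where
  "std_ll F G \<longleftrightarrow> (\<forall>x\<in>ext_supp (fst F). \<forall>y\<in>ext_supp (fst G). x < y)"

definition std_sq :: "mfun \<Rightarrow> mfun \<Rightarrow> bool" where
  "std_sq F G \<longleftrightarrow> closure (ext_supp (fst F)) \<subseteq> ext_supp (fst G)"

definition std_less :: "mfun \<Rightarrow> mfun \<Rightarrow> bool" where
  "std_less F G \<longleftrightarrow> std_ll F G \<or> std_sq F G"

definition circ :: "mfun \<Rightarrow> mfun \<Rightarrow> bool" where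
  "circ F H \<longleftrightarrow>
     (card (orbitals (fst F)) > 2 \<and>
       (let inner = {J\<in>orbitals (fst F). \<exists>K1\<in>orbitals (fst F). \<exists>K2\<in>orbitals (fst F).
                       left_of K1 J \<and> left_of J K2}
        in H = ((\<lambda>t. if t \<in> \<Union>inner then fst F t else t), snd F \<inter> \<Union>inner)))
   \<or> ((card (orbitals (fst F)) = 1 \<or> card (orbitals (fst F)) = 2) \<and>
       (\<exists>J\<in>orbitals (fst F). pos_orb (fst F) J \<and>
          marked H \<and> supt (fst H) = {Inf J<..<mark F J} \<and>
          pos_orb (fst H) {Inf J<..<mark F J}))"

inductive std_pair :: "mfun \<Rightarrow> mfun \<Rightarrow> bool" where
  ll: "standard F \<Longrightarrow> standard G \<Longrightarrow> fast {F, G} \<Longrightarrow> std_ll F G \<Longrightarrow> std_pair F G"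
| sq: "standard F \<Longrightarrow> standard G \<Longrightarrow> fast {F, G} \<Longrightarrow> std_sq F G \<Longrightarrow> circ G H \<Longrightarrow>
       std_pair H F \<Longrightarrow> std_pair F G"

definition in_S :: "mfun set \<Rightarrow> bool" where
  "in_S \<A> \<longleftrightarrow> finite \<A> \<and> (\<forall>F\<in>\<A>. standard F) \<and>
     (\<forall>F\<in>\<A>. \<forall>G\<in>\<A>. F \<noteq> G \<longrightarrow> std_less F G \<or> std_less G F) \<and>
     (\<forall>F\<in>\<A>. \<forall>G\<in>\<A>. std_less F G \<longrightarrow> std_pair F G)"

definition osc :: "mfun \<Rightarrow> mfun \<Rightarrow> nat" where
  "osc F G = card {K\<in>orbitals (fst G). \<exists>p\<in>trans_pts (fst F). p \<in> K}"

text \<open>A signature is represented with base {0..<n} (n = fst), ordered as usual;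
  the value on a pair i < j is snd i j. Equivalence = same size and same values on pairs.\<close>

type_synonym sig = "nat \<times> (nat \<Rightarrow> nat \<Rightarrow> nat)"

definition sig_eq :: "sig \<Rightarrow> sig \<Rightarrow> bool" where
  "sig_eq A B \<longleftrightarrow> fst A = fst B \<and> (\<forall>i j. i < j \<and> j < fst A \<longrightarrow> snd A i j = snd B i j)"

definition in_SS :: "sig \<Rightarrow> bool" where
  "in_SS A \<longleftrightarrow> (\<exists>\<A> e. in_S \<A> \<and> bij_betw e {0..<fst A} \<A> \<and>
       (\<forall>i j. i < j \<and> j < fst A \<longrightarrow> std_less (e i) (e j) \<and> snd A i j = osc (e i) (e j)))"

definition sig_zero :: sig where
  "sig_zero = (0, \<lambda>i j. 0)"

definition sig_plus :: "sig \<Rightarrow> sig \<Rightarrow> sig" where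
  "sig_plus A B = (fst A + fst B, \<lambda>i j. if j < fst A then snd A i j
       else if fst A \<le> i then snd B (i - fst A) (j - fst A) else 0)"

definition sig_exp :: "sig \<Rightarrow> sig" where
  "sig_exp A = (fst A, \<lambda>i j. snd A i j + 1)"

text \<open>sig_starexp A C is A * exp(C).\<close>
definition sig_starexp :: "sig \<Rightarrow> sig \<Rightarrow> sig" where
  "sig_starexp A C = (fst A + fst C, \<lambda>i j. if j < fst A then snd A i j
       else if fst A \<le> i then snd C (i - fst A) (j - fst A) + 1 else 1)"

definition infl_sel :: "sig \<Rightarrow> nat \<Rightarrow> nat list" where
  "infl_sel A m = sorted_list_of_set {i. i < m \<and> 0 < snd A i m}"

datatype ielem = Old nat | New nat

text \<open>Positions 0..m-1: old elements below m; then the new elements i^m in increasing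
  order of i; then the old elements m, m+1, ...\<close>
definition infl_elem :: "sig \<Rightarrow> nat \<Rightarrow> nat \<Rightarrow> ielem" where
  "infl_elem A m x = (let L = infl_sel A m; p = length L in
     if x < m then Old x else if x < m + p then New (L ! (x - m)) else Old (x - p))"

fun infl_val :: "sig \<Rightarrow> nat \<Rightarrow> ielem \<Rightarrow> ielem \<Rightarrow> nat" where
  "infl_val A m (Old i) (Old j) = snd A i j"
| "infl_val A m (New i) (New j) = snd A i j"
| "infl_val A m (Old i) (New j) = min (snd A j m - 1) (snd A i m)"
| "infl_val A m (New i) (Old k) = (if k = m then snd A i m else min (snd A i m) (snd A m k))"

definition sig_inflate :: "sig \<Rightarrow> nat \<Rightarrow> sig" where
  "sig_inflate A m = (fst A + length (infl_sel A m),
     \<lambda>x y. infl_val A m (infl_elem A m x) (infl_elem A m y))"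

definition sig_restrict :: "sig \<Rightarrow> nat set \<Rightarrow> sig" where
  "sig_restrict A S = (card S, \<lambda>i j. snd A (sorted_list_of_set S ! i) (sorted_list_of_set S ! j))"

definition sig_step :: "sig \<Rightarrow> sig \<Rightarrow> bool" where
  "sig_step B A \<longleftrightarrow> (\<exists>m < fst B. \<exists>S. S \<subseteq> {0..<fst (sig_inflate B m)} \<and>
       sig_eq A (sig_restrict (sig_inflate B m) S))"

definition sig_le :: "sig \<Rightarrow> sig \<Rightarrow> bool" where
  "sig_le A B \<longleftrightarrow> (\<exists>C. sig_step\<^sup>*\<^sup>* B C \<and> sig_eq C A)"

end

theory Submission
  imports Defs
begin

text \<open>In \<open>exp((A + B) * exp(C))\<close> all values are positive, so every element of the A-block
  oscillates with the first element \<open>m\<close> of the B-block (which exists as \<open>B \<noteq> 0\<close>), with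
  oscillation 1. Inflating at \<open>m\<close> therefore produces a copy \<open>i\<^sup>m\<close> of every element of
  the A-block, and each copy oscillates with every later old element at most once, i.e.
  exactly once. Discarding the original A-block leaves \<open>exp(A + B * exp(C))\<close>.\<close>

lemma sig_le_if_step:
  assumes "sig_step A C" and "sig_eq D C"
  shows "sig_le D A"
  unfolding sig_le_def
  using assms by (intro exI[of _ C]) (auto simp: sig_eq_def)

lemma snd_sig_restrict_interval:
  assumes "i < n" and "j < n"
  shows "snd (sig_restrict A {m..<m + n}) i j = snd A (m + i) (m + j)"
  using assms by (simp add: sig_restrict_def)

lemma infl_sel_full:
  assumes "\<forall>i<m. 0 < snd A i m"
  shows "infl_sel A m = [0..<m]"
proof -
  have "{i. i < m \<and> 0 < snd A i m} = {0..<m}" using assms by auto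
  then show ?thesis by (simp add: infl_sel_def)
qed

lemma infl_elem_shift_full:
  assumes "\<forall>i<m. 0 < snd A i m"
  shows "infl_elem A m (m + i) = (if i < m then New i else Old i)"
  by (simp add: infl_elem_def infl_sel_full[OF assms] Let_def)

text \<open>The signature obtained from \<open>A\<close> by replacing each element below \<open>m\<close> by its copy
  \<open>i\<^sup>m\<close> (the value at \<open>j = m\<close> plays the role of \<open>min (A i m) (A m m)\<close> with \<open>A m m = \<infinity>\<close>).\<close>
definition sig_lift_prefix :: "sig \<Rightarrow> nat \<Rightarrow> sig" where
  "sig_lift_prefix A m = (fst A, \<lambda>i j.
     if i < m \<and> m < j then min (snd A i m) (snd A m j) else snd A i j)"

lemma sig_step_lift_prefix:
  assumes "m < fst A" and pos: "\<forall>i<m. 0 < snd A i m"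
  shows "sig_step A (sig_lift_prefix A m)"
  unfolding sig_step_def
proof (intro exI conjI)
  let ?S = "{m..<m + fst A}"
  show "m < fst A" by fact
  show "?S \<subseteq> {0..<fst (sig_inflate A m)}"
    by (auto simp: sig_inflate_def infl_sel_full[OF pos])
  show "sig_eq (sig_lift_prefix A m) (sig_restrict (sig_inflate A m) ?S)"
    unfolding sig_eq_def
  proof (intro conjI allI impI)
    show "fst (sig_lift_prefix A m) = fst (sig_restrict (sig_inflate A m) ?S)"
      by (simp add: sig_lift_prefix_def sig_restrict_def)
  next
    fix i j assume ij: "i < j \<and> j < fst (sig_lift_prefix A m)"
    then have "snd (sig_restrict (sig_inflate A m) ?S) i j
        = infl_val A m (infl_elem A m (m + i)) (infl_elem A m (m + j))"
      by (simp add: snd_sig_restrict_interval sig_inflate_def sig_lift_prefix_def)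
    then show "snd (sig_lift_prefix A m) i j = snd (sig_restrict (sig_inflate A m) ?S) i j"
      using ij by (cases "j < m"; cases "i < m"; cases "j = m")
        (simp_all add: infl_elem_shift_full[OF pos] sig_lift_prefix_def)
  qed
qed

lemma sig_le_lift_prefix:
  assumes "m < fst A" and "\<forall>i<m. 0 < snd A i m" and "sig_eq D (sig_lift_prefix A m)"
  shows "sig_le D A"
  using sig_le_if_step[OF sig_step_lift_prefix] assms by blast

lemma sig_exp_plus_starexp_eq_lift_prefix:
  assumes "0 < fst B"
  shows "sig_eq (sig_exp (sig_plus A (sig_starexp B C)))
     (sig_lift_prefix (sig_exp (sig_starexp (sig_plus A B) C)) (fst A))"
  unfolding sig_eq_def
proof (intro conjI allI impI)
  let ?X = "sig_exp (sig_plus A (sig_starexp B C))"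
  let ?Y = "sig_exp (sig_starexp (sig_plus A B) C)"
  show "fst ?X = fst (sig_lift_prefix ?Y (fst A))"
    by (simp add: sig_lift_prefix_def sig_exp_def sig_starexp_def sig_plus_def)
  fix i j assume ij: "i < j \<and> j < fst ?X"
  consider "j < fst A" | "i < fst A" "fst A \<le> j" | "fst A \<le> i"
    by linarith
  then show "snd ?X i j = snd (sig_lift_prefix ?Y (fst A)) i j"
  proof cases
    case 3
    with ij show ?thesis
      by (simp add: sig_lift_prefix_def sig_exp_def sig_starexp_def sig_plus_def
          less_diff_conv2 le_diff_conv2 add.commute)
  qed (use ij assms in \<open>simp_all add: sig_lift_prefix_def sig_exp_def sig_starexp_def sig_plus_def\<close>)
qed

theorem lemma8p9:
  assumes "in_SS A" and "in_SS B" and "in_SS C"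
    and "\<not> sig_eq B sig_zero" and "\<not> sig_eq C sig_zero"
  shows "sig_le (sig_exp (sig_plus A (sig_starexp B C))) (sig_exp (sig_starexp (sig_plus A B) C))"
proof -
  have B_nonempty: "0 < fst B"
    using assms(4) by (auto simp: sig_eq_def sig_zero_def)
  show ?thesis
  proof (rule sig_le_lift_prefix)
    show "fst A < fst (sig_exp (sig_starexp (sig_plus A B) C))"
      using B_nonempty by (simp add: sig_exp_def sig_starexp_def sig_plus_def)
    show "\<forall>i<fst A. 0 < snd (sig_exp (sig_starexp (sig_plus A B) C)) i (fst A)"
      by (simp add: sig_exp_def)
    show "sig_eq (sig_exp (sig_plus A (sig_starexp B C)))
        (sig_lift_prefix (sig_exp (sig_starexp (sig_plus A B) C)) (fst A))"
      using B_nonempty by (rule sig_exp_plus_starexp_eq_lift_prefix)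
  qed
qed

end
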